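(* For every fixed positive integer $\ell$, the following problem can be solved in linear time: given an incomplete matrix $\mathbf{S}\in\{0,1,\square\}^{n\times \ell}$ with exactly $\ell$ columns and integers $\alpha\le\beta$, decide whether there is a completion $\mathbf{T}\in\{0,1\}^{n\times\ell}$ of $\mathbf{S}$ with $\alpha\le\gamma(\mathbf{T})$ and $\delta(\mathbf{T})\le\beta$.
   Context: The symbol $\square$ denotes a missing entry. A matrix $\mathbf{T}\in\{0,1\}^{n\times\ell}$ is a completion of $\mathbf{S}\in\{0,1,\square\}^{n\times\ell}$ if $\mathbf{T}[i,j]=\mathbf{S}[i,j]$ whenever $\mathbf{S}[i,j]\neq\square$. For row vectors $u,w\in\{0,1,\square\}^\ell$, $d(u,w)$ is the number of positions $j$ with $u[j]\ne w[j]$, $u[j]\neq\square$ and $w[j]\neq\square$ (Hamming distance). For a complete matrix $\mathbf{T}$ with rows $\mathbf{T}[1],\dots,\mathbf{T}[n]$, $\gamma(\mathbf{T})=\min_{i\ne i'}d(\mathbf{T}[i],\mathbf{T}[i'])$ and $\delta(\mathbf{T})=\max_{i\ne i'}d(\mathbf{T}[i],\mathbf{T}[i'])$. This decision problem is called Diameter Matrix Completion (DMC). *)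

theory Defs
  imports Main
begin

text \<open>An incomplete binary matrix is a list of rows; an entry is a bool option,
  where None is the missing entry (the box symbol), Some False is 0 and Some True is 1.
  A complete matrix is a list of rows of type bool list.\<close>

type_synonym imatrix = "bool option list list"
type_synonym cmatrix = "bool list list"

definition has_columns :: "nat \<Rightarrow> 'a list list \<Rightarrow> bool" where
  "has_columns l S \<longleftrightarrow> (\<forall>r\<in>set S. length r = l)"

definition hdist :: "bool option list \<Rightarrow> bool option list \<Rightarrow> nat" where
  "hdist u w = card {j. j < length u \<and> j < length w \<and> u ! j \<noteq> None \<and> w ! j \<noteq> None \<and> u ! j \<noteq> w ! j}"

definition is_completion :: "cmatrix \<Rightarrow> imatrix \<Rightarrow> bool" where
  "is_completion T S \<longleftrightarrow> length T = length S \<and>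
     (\<forall>i < length S. length (T ! i) = length (S ! i) \<and>
        (\<forall>j < length (S ! i). S ! i ! j \<noteq> None \<longrightarrow> S ! i ! j = Some (T ! i ! j)))"

definition pair_dists :: "cmatrix \<Rightarrow> nat set" where
  "pair_dists T = {hdist (map Some (T ! i)) (map Some (T ! i')) | i i'.
                     i < length T \<and> i' < length T \<and> i \<noteq> i'}"

definition gamma :: "cmatrix \<Rightarrow> nat" where
  "gamma T = Min (pair_dists T)"

definition delta :: "cmatrix \<Rightarrow> nat" where
  "delta T = Max (pair_dists T)"

text \<open>For matrices with fewer than two rows gamma and delta are
  taken over an empty set of pairs; we use the convention that the constraints are then
  vacuous (min of the empty set is +infinity, max is -infinity).\<close>
definition dmc_yes :: "imatrix \<Rightarrow> int \<Rightarrow> int \<Rightarrow> bool" where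
  "dmc_yes S \<alpha> \<beta> \<longleftrightarrow> (\<exists>T. is_completion T S \<and>
      (2 \<le> length T \<longrightarrow> \<alpha> \<le> int (gamma T) \<and> int (delta T) \<le> \<beta>))"

fun enc_cell :: "bool option \<Rightarrow> nat" where
  "enc_cell (Some False) = 1"
| "enc_cell (Some True) = 2"
| "enc_cell None = 3"

text \<open>Row separator 4; binary digits 0,1 are 5,6; minus sign 7; field separator 8.\<close>
fun bits :: "nat \<Rightarrow> nat list" where
  "bits n = (if n < 2 then [n] else bits (n div 2) @ [n mod 2])"

definition enc_int :: "int \<Rightarrow> nat list" where
  "enc_int k = (if k < 0 then [7] else []) @ map (\<lambda>b. b + 5) (bits (nat \<bar>k\<bar>))"

definition encode :: "imatrix \<Rightarrow> int \<Rightarrow> int \<Rightarrow> nat list" where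
  "encode S \<alpha> \<beta> = concat (map (\<lambda>r. map enc_cell r @ [4]) S) @ [8] @ enc_int \<alpha> @ [8] @ enc_int \<beta>"

datatype move = MoveL | MoveR | MoveN

record tm =
  tm_tapes :: nat
  tm_states :: "nat set"
  tm_symbols :: "nat set"
  tm_trans :: "nat \<Rightarrow> nat list \<Rightarrow> nat \<times> (nat \<times> move) list"
  tm_start :: nat
  tm_accept :: nat
  tm_reject :: nat

text \<open>A tape is (cells left of head in reverse order, head symbol, cells right of head);
  blank symbol is 0, tapes are two-way infinite.\<close>
type_synonym tape = "nat list \<times> nat \<times> nat list"
type_synonym config = "nat \<times> tape list"

definition wf_tm :: "tm \<Rightarrow> bool" where
  "wf_tm M \<longleftrightarrow> 1 \<le> tm_tapes M \<and> finite (tm_states M) \<and> finite (tm_symbols M) \<and>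
     0 \<in> tm_symbols M \<and> tm_start M \<in> tm_states M \<and> tm_accept M \<in> tm_states M \<and>
     tm_reject M \<in> tm_states M \<and> tm_accept M \<noteq> tm_reject M \<and>
     (\<forall>q \<in> tm_states M. \<forall>xs. length xs = tm_tapes M \<longrightarrow> set xs \<subseteq> tm_symbols M \<longrightarrow>
        fst (tm_trans M q xs) \<in> tm_states M \<and>
        length (snd (tm_trans M q xs)) = tm_tapes M \<and>
        (\<forall>a\<in>set (snd (tm_trans M q xs)). fst a \<in> tm_symbols M))"

fun move_tape :: "tape \<Rightarrow> nat \<times> move \<Rightarrow> tape" where
  "move_tape (l, h, r) (w, MoveL) = (case l of [] \<Rightarrow> ([], 0, w # r) | x # l' \<Rightarrow> (l', x, w # r))"
| "move_tape (l, h, r) (w, MoveR) = (case r of [] \<Rightarrow> (w # l, 0, []) | x # r' \<Rightarrow> (w # l, x, r'))"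
| "move_tape (l, h, r) (w, MoveN) = (l, w, r)"

definition tm_step :: "tm \<Rightarrow> config \<Rightarrow> config" where
  "tm_step M c = (let (q, ts) = c in
     if q = tm_accept M \<or> q = tm_reject M then c
     else (let (q', acts) = tm_trans M q (map (\<lambda>(l, h, r). h) ts)
           in (q', map2 move_tape ts acts)))"

definition tm_init :: "tm \<Rightarrow> nat list \<Rightarrow> config" where
  "tm_init M w = (tm_start M,
     (case w of [] \<Rightarrow> ([], 0, []) | x # xs \<Rightarrow> ([], x, xs)) # replicate (tm_tapes M - 1) ([], 0, []))"

definition tm_run :: "tm \<Rightarrow> nat list \<Rightarrow> nat \<Rightarrow> config" where
  "tm_run M w t = (tm_step M ^^ t) (tm_init M w)"

end

theory Submission
  imports Defs "HOL-Library.Countable_Set"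
begin

text \<open>Distances between rows of length \<open>\<ell>\<close> lie in \<open>[0, \<ell>]\<close>, so whether a completion \<open>T\<close>
  meets the bounds depends only on its profile: the set of its rows (a subset of \<open>{0,1}\<^sup>\<ell>\<close>)
  together with a flag telling whether some row occurs twice. The set of profiles of all
  completions of \<open>S\<close> is updated row by row, and \<open>\<alpha>\<close>, \<open>\<beta>\<close> may be clamped to
  \<open>[-\<ell>-1, \<ell>+1]\<close>. For fixed \<open>\<ell>\<close> there are finitely many such data, so a finite automaton
  decides DMC in one pass over the encoded input, and a one-tape Turing machine simulating it
  halts after \<open>|w| + 1\<close> steps.\<close>

text \<open>The simulating machine halts as soon as it enters \<open>accept\<close> or \<open>reject\<close>, hence the
  automaton may enter them only on the blank \<open>0\<close> that follows the input.\<close>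

locale halting_dfa =
  fixes states :: "'s set" and step :: "'s \<Rightarrow> nat \<Rightarrow> 's" and start accept reject :: 's
  assumes finite_states: "finite states"
    and start_state: "start \<in> states"
    and accept_state: "accept \<in> states"
    and reject_state: "reject \<in> states"
    and accept_neq_reject: "accept \<noteq> reject"
    and step_state: "q \<in> states \<Longrightarrow> step q s \<in> states"
    and start_not_halting: "start \<notin> {accept, reject}"
    and no_early_halting:
      "q \<in> states \<Longrightarrow> q \<notin> {accept, reject} \<Longrightarrow> s \<noteq> 0 \<Longrightarrow> step q s \<notin> {accept, reject}"
begin

abbreviation code :: "'s \<Rightarrow> nat" where
  "code \<equiv> to_nat_on states"

definition sim_tm :: "nat set \<Rightarrow> tm" where
  "sim_tm \<Sigma> = \<lparr>tm_tapes = 1, tm_states = code ` states, tm_symbols = \<Sigma>,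
     tm_trans = (\<lambda>q xs. (code (step (inv_into states code q) (hd xs)), [(0, MoveR)])),
     tm_start = code start, tm_accept = code accept, tm_reject = code reject\<rparr>"

lemma inj_on_code: "inj_on code states"
  using finite_states by (simp add: countable_finite inj_on_to_nat_on)

lemma wf_sim_tm: "finite \<Sigma> \<Longrightarrow> 0 \<in> \<Sigma> \<Longrightarrow> wf_tm (sim_tm \<Sigma>)"
  using finite_states start_state accept_state reject_state accept_neq_reject step_state inj_on_code
  by (auto simp: wf_tm_def sim_tm_def inj_on_eq_iff)

lemma foldl_step_state: "q \<in> states \<Longrightarrow> foldl step q w \<in> states"
  by (induction w arbitrary: q) (auto simp: step_state)

lemma foldl_step_not_halting: "0 \<notin> set w \<Longrightarrow> foldl step start w \<notin> {accept, reject}"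
proof (induction w rule: rev_induct)
  case Nil
  then show ?case using start_not_halting by simp
next
  case (snoc s w)
  then show ?case using no_early_halting[OF foldl_step_state[OF start_state]] by simp
qed

lemma tm_step_sim_tm:
  assumes "q \<in> states" and "q \<notin> {accept, reject}"
  shows "tm_step (sim_tm \<Sigma>) (code q, [(L, s, R)]) =
    (code (step q s), [move_tape (L, s, R) (0, MoveR)])"
proof -
  have "code q \<noteq> code accept" "code q \<noteq> code reject"
    using assms accept_state reject_state inj_on_code by (auto simp: inj_on_eq_iff)
  then show ?thesis using assms inj_on_code by (simp add: tm_step_def sim_tm_def)
qed

lemma tm_run_sim_tm:
  assumes "0 \<notin> set w" and "k \<le> length w"
  shows "tm_run (sim_tm \<Sigma>) w k =
    (code (foldl step start (take k w)),
     [(replicate k 0, if k < length w then w ! k else 0, drop (Suc k) w)])"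
  using assms(2)
proof (induction k)
  case 0
  then show ?case by (cases w) (auto simp: tm_run_def tm_init_def sim_tm_def)
next
  case (Suc k)
  let ?q = "foldl step start (take k w)"
  have k: "k < length w" using Suc.prems by simp
  have q: "?q \<in> states" "?q \<notin> {accept, reject}"
    using foldl_step_state[OF start_state] foldl_step_not_halting assms(1) by (auto dest: in_set_takeD)
  have "tm_run (sim_tm \<Sigma>) w (Suc k) = tm_step (sim_tm \<Sigma>) (tm_run (sim_tm \<Sigma>) w k)"
    by (simp add: tm_run_def)
  also have "\<dots> = (code (step ?q (w ! k)), [move_tape (replicate k 0, w ! k, drop (Suc k) w) (0, MoveR)])"
    using Suc k tm_step_sim_tm[OF q] by simp
  also have "\<dots> = (code (foldl step start (take (Suc k) w)),
      [(replicate (Suc k) 0, if Suc k < length w then w ! Suc k else 0, drop (Suc (Suc k)) w)])"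
  proof -
    have "foldl step start (take (Suc k) w) = step ?q (w ! k)"
      using k by (simp add: take_Suc_conv_app_nth)
    then show ?thesis
      using k by (cases "Suc k < length w") (auto simp: Cons_nth_drop_Suc[symmetric])
  qed
  finally show ?case .
qed

lemma sim_tm_final_state:
  assumes "0 \<notin> set w"
  shows "fst (tm_run (sim_tm \<Sigma>) w (Suc (length w))) = code (step (foldl step start w) 0)"
proof -
  have "tm_run (sim_tm \<Sigma>) w (Suc (length w)) = tm_step (sim_tm \<Sigma>) (tm_run (sim_tm \<Sigma>) w (length w))"
    by (simp add: tm_run_def)
  then show ?thesis
    using tm_run_sim_tm[OF assms, of "length w"] tm_step_sim_tm foldl_step_state[OF start_state]
      foldl_step_not_halting[OF assms] by simp
qed

end

definition completes_row :: "bool list \<Rightarrow> bool option list \<Rightarrow> bool" where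
  "completes_row u r \<longleftrightarrow> length u = length r \<and> (\<forall>j<length r. r ! j \<noteq> None \<longrightarrow> r ! j = Some (u ! j))"

lemma is_completion_iff_list_all2: "is_completion T S \<longleftrightarrow> list_all2 completes_row T S"
  by (auto simp: is_completion_def list_all2_conv_all_nth completes_row_def)

type_synonym profile = "bool list set \<times> bool"

definition row_profile :: "cmatrix \<Rightarrow> profile" where
  "row_profile T = (set T, \<not> distinct T)"

definition completion_profiles :: "imatrix \<Rightarrow> profile set" where
  "completion_profiles S = row_profile ` {T. list_all2 completes_row T S}"

definition add_row :: "profile set \<Rightarrow> bool option list \<Rightarrow> profile set" where
  "add_row P r = {(insert u A, d \<or> u \<in> A) | A d u. (A, d) \<in> P \<and> completes_row u r}"

lemma row_profile_snoc: "row_profile (T @ [u]) = (insert u (set T), \<not> distinct T \<or> u \<in> set T)"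
  by (auto simp: row_profile_def)

lemma completion_profiles_snoc: "completion_profiles (S @ [r]) = add_row (completion_profiles S) r"
proof
  show "completion_profiles (S @ [r]) \<subseteq> add_row (completion_profiles S) r"
  proof
    fix p assume "p \<in> completion_profiles (S @ [r])"
    then obtain T u where p: "p = row_profile (T @ [u])" and T: "list_all2 completes_row T S"
      and u: "completes_row u r"
      by (auto simp: completion_profiles_def list_all2_append2 list_all2_Cons2)
    have "(set T, \<not> distinct T) \<in> completion_profiles S"
      using T by (auto simp: completion_profiles_def row_profile_def)
    then show "p \<in> add_row (completion_profiles S) r"
      unfolding add_row_def p row_profile_snoc using u by blast
  qed
next
  show "add_row (completion_profiles S) r \<subseteq> completion_profiles (S @ [r])"
  proof
    fix p assume "p \<in> add_row (completion_profiles S) r"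
    then obtain T u where "p = row_profile (T @ [u])" "list_all2 completes_row T S" "completes_row u r"
      by (auto simp: add_row_def completion_profiles_def row_profile_snoc) (auto simp: row_profile_def)
    then have "list_all2 completes_row (T @ [u]) (S @ [r])" and "p = row_profile (T @ [u])"
      by (simp_all add: list_all2_appendI)
    then show "p \<in> completion_profiles (S @ [r])" unfolding completion_profiles_def by blast
  qed
qed

lemma foldl_add_row: "foldl add_row {({}, False)} S = completion_profiles S"
proof (induction S rule: rev_induct)
  case Nil
  then show ?case by (simp add: completion_profiles_def row_profile_def)
next
  case (snoc r S)
  then show ?case by (simp add: completion_profiles_snoc)
qed

definition row_dist :: "bool list \<Rightarrow> bool list \<Rightarrow> int" where
  "row_dist u v = int (hdist (map Some u) (map Some v))"

lemma row_dist_self [simp]: "row_dist u u = 0"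
  by (simp add: row_dist_def hdist_def)

lemma row_dist_le_length: "row_dist u v \<le> int (length u)"
proof -
  have "hdist (map Some u) (map Some v) \<le> card {..<length u}"
    unfolding hdist_def by (rule card_mono) auto
  then show ?thesis by (simp add: row_dist_def)
qed

text \<open>A repeated row contributes the distance 0; this is what the flag of a profile records.\<close>
fun admissible :: "int \<Rightarrow> int \<Rightarrow> profile \<Rightarrow> bool" where
  "admissible a b (A, d) \<longleftrightarrow>
     (\<forall>u\<in>A. \<forall>v\<in>A. u \<noteq> v \<longrightarrow> a \<le> row_dist u v \<and> row_dist u v \<le> b) \<and> (d \<longrightarrow> a \<le> 0 \<and> 0 \<le> b)"

lemma gamma_delta_bounds_iff:
  "(2 \<le> length T \<longrightarrow> a \<le> int (gamma T) \<and> int (delta T) \<le> b) \<longleftrightarrow>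
   (\<forall>x\<in>pair_dists T. a \<le> int x \<and> int x \<le> b)"
proof (cases "2 \<le> length T")
  case False
  then have "pair_dists T = {}" by (auto simp: pair_dists_def)
  then show ?thesis using False by simp
next
  case True
  have "pair_dists T \<subseteq>
      (\<lambda>(i, j). hdist (map Some (T ! i)) (map Some (T ! j))) ` ({..<length T} \<times> {..<length T})"
    by (auto simp: pair_dists_def)
  then have fin: "finite (pair_dists T)" by (rule finite_subset) auto
  have "hdist (map Some (T ! 0)) (map Some (T ! 1)) \<in> pair_dists T"
    using True unfolding pair_dists_def by force
  then have ne: "pair_dists T \<noteq> {}" by blast
  show ?thesis
    using True Min_in[OF fin ne] Max_in[OF fin ne] Min_le[OF fin] Max_ge[OF fin]
    unfolding gamma_def delta_def by force
qed

lemma pairwise_iff_admissible: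
  "(\<forall>i<length T. \<forall>j<length T. i \<noteq> j \<longrightarrow> a \<le> row_dist (T ! i) (T ! j) \<and> row_dist (T ! i) (T ! j) \<le> b)
   \<longleftrightarrow> admissible a b (row_profile T)"
  (is "?pairwise \<longleftrightarrow> _")
proof
  assume pairwise: ?pairwise
  have "a \<le> row_dist u v \<and> row_dist u v \<le> b" if "u \<in> set T" "v \<in> set T" "u \<noteq> v" for u v
    using that pairwise by (auto simp: in_set_conv_nth)
  moreover have "a \<le> 0 \<and> 0 \<le> b" if "\<not> distinct T"
    using that pairwise by (auto simp: distinct_conv_nth) (metis row_dist_self)+
  ultimately show "admissible a b (row_profile T)" by (simp add: row_profile_def)
next
  assume admissible: "admissible a b (row_profile T)"
  show ?pairwise
  proof (intro allI impI)
    fix i j assume ij: "i < length T" "j < length T" "i \<noteq> j"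
    show "a \<le> row_dist (T ! i) (T ! j) \<and> row_dist (T ! i) (T ! j) \<le> b"
    proof (cases "T ! i = T ! j")
      case True
      then have "\<not> distinct T" using ij by (auto simp: distinct_conv_nth)
      then show ?thesis using admissible True by (simp add: row_profile_def)
    next
      case False
      then show ?thesis using admissible ij by (simp add: row_profile_def)
    qed
  qed
qed

definition clamp :: "nat \<Rightarrow> int \<Rightarrow> int" where
  "clamp l a = max (- int (Suc l)) (min a (int (Suc l)))"

lemma clamp_compare:
  assumes "0 \<le> x" and "x \<le> int l"
  shows "clamp l a \<le> x \<longleftrightarrow> a \<le> x" and "x \<le> clamp l a \<longleftrightarrow> x \<le> a"
  using assms by (auto simp: clamp_def)

lemma admissible_clamp:
  assumes "A \<subseteq> {u. length u = l}"
  shows "admissible (clamp l a) (clamp l b) (A, d) \<longleftrightarrow> admissible a b (A, d)"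
proof -
  have "0 \<le> row_dist u v \<and> row_dist u v \<le> int l" if "u \<in> A" for u v
    using row_dist_le_length[of u v] assms that by (auto simp: row_dist_def)
  then show ?thesis by (simp add: clamp_compare)
qed

lemma dmc_yes_iff_completion_profiles:
  assumes "has_columns l S"
  shows "dmc_yes S a b \<longleftrightarrow> (\<exists>p\<in>completion_profiles S. admissible (clamp l a) (clamp l b) p)"
proof -
  have rows: "set T \<subseteq> {u. length u = l}" if "list_all2 completes_row T S" for T
    using that assms
    by (auto simp: list_all2_conv_all_nth completes_row_def has_columns_def in_set_conv_nth)
      (metis nth_mem)
  have clamp: "admissible (clamp l a) (clamp l b) (row_profile T) \<longleftrightarrow> admissible a b (row_profile T)"
    if "list_all2 completes_row T S" for T
    unfolding row_profile_def using admissible_clamp[OF rows[OF that]] .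
  have "dmc_yes S a b \<longleftrightarrow> (\<exists>T. list_all2 completes_row T S \<and> admissible a b (row_profile T))"
    unfolding dmc_yes_def is_completion_iff_list_all2 gamma_delta_bounds_iff
      pairwise_iff_admissible[symmetric] by (auto simp: pair_dists_def row_dist_def)
  also have "\<dots> \<longleftrightarrow> (\<exists>T. list_all2 completes_row T S \<and> admissible (clamp l a) (clamp l b) (row_profile T))"
    using clamp by blast
  finally show ?thesis by (auto simp: completion_profiles_def)
qed

definition signed :: "bool \<Rightarrow> nat \<Rightarrow> int" where
  "signed neg v = (if neg then - int v else int v)"

definition dec_cell :: "nat \<Rightarrow> bool option" where
  "dec_cell s = (if s = 1 then Some False else if s = 2 then Some True else None)"

text \<open>In \<open>Rows P cur\<close>, \<open>P\<close> is the set of profiles of the completions of the rows read so far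
  and \<open>cur\<close> the part of the current row read so far. \<open>Num P None neg v\<close> reads \<open>\<alpha>\<close> and
  \<open>Num P (Some a) neg v\<close> reads \<open>\<beta>\<close>, where \<open>a\<close> is the clamped \<open>\<alpha>\<close>; absolute values
  saturate at \<open>\<ell> + 1\<close>.\<close>
datatype state = Rows "profile set" "bool option list" | Num "profile set" "int option" bool nat
  | Junk | Accept | Reject

fun dmc_step :: "nat \<Rightarrow> state \<Rightarrow> nat \<Rightarrow> state" where
  "dmc_step l (Rows P cur) s =
     (if s \<in> {1, 2, 3} \<and> length cur < l then Rows P (cur @ [dec_cell s])
      else if s = 4 \<and> length cur = l then Rows (add_row P cur) []
      else if s = 8 then Num P None False 0
      else Junk)"
| "dmc_step l (Num P x neg v) s =
     (if s = 7 then Num P x True v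
      else if s \<in> {5, 6} then Num P x neg (min (2 * v + (s - 5)) (Suc l))
      else case x of
        None \<Rightarrow> if s = 8 then Num P (Some (signed neg v)) False 0 else Junk
      | Some a \<Rightarrow>
          if s = 0 then if \<exists>p\<in>P. admissible a (signed neg v) p then Accept else Reject
          else Junk)"
| "dmc_step l q s = q"

fun state_ok :: "nat \<Rightarrow> state \<Rightarrow> bool" where
  "state_ok l (Rows P cur) \<longleftrightarrow> P \<subseteq> Pow {u. length u = l} \<times> UNIV \<and> length cur \<le> l"
| "state_ok l (Num P x neg v) \<longleftrightarrow>
     P \<subseteq> Pow {u. length u = l} \<times> UNIV \<and> set_option x \<subseteq> {- int (Suc l)..int (Suc l)} \<and> v \<le> Suc l"
| "state_ok l q \<longleftrightarrow> True"

lemma finite_state_ok: "finite {q. state_ok l q}"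
proof -
  let ?P = "Pow (Pow {u :: bool list. length u = l} \<times> (UNIV :: bool set))"
  have "finite {u :: bool list. length u = l}"
    using finite_lists_length_eq[of "UNIV :: bool set" l] by simp
  then have "finite ?P" by simp
  moreover have "finite {cur :: bool option list. length cur \<le> l}"
    using finite_lists_length_le[of "UNIV :: bool option set" l] by simp
  moreover have "{q. state_ok l q} \<subseteq>
      (\<lambda>(P, cur). Rows P cur) ` (?P \<times> {cur. length cur \<le> l}) \<union>
      (\<lambda>(P, x, neg, v). Num P x neg v) `
        (?P \<times> insert None (Some ` {- int (Suc l)..int (Suc l)}) \<times> UNIV \<times> {..Suc l}) \<union>
      {Junk, Accept, Reject}" (is "_ \<subseteq> ?S")
  proof
    fix q assume "q \<in> {q. state_ok l q}"
    then show "q \<in> ?S"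
    proof (cases q)
      case (Num P x neg v)
      then show ?thesis using \<open>q \<in> {q. state_ok l q}\<close> by (cases x) (auto simp: image_iff)
    qed (auto simp: image_iff)
  qed
  ultimately show ?thesis by (auto intro: finite_subset)
qed

lemma add_row_lengths:
  "P \<subseteq> Pow {u. length u = l} \<times> UNIV \<Longrightarrow> length r = l \<Longrightarrow> add_row P r \<subseteq> Pow {u. length u = l} \<times> UNIV"
  by (auto simp: add_row_def completes_row_def)

lemma state_ok_dmc_step: "state_ok l q \<Longrightarrow> state_ok l (dmc_step l q s)"
  by (cases q) (auto simp: add_row_lengths signed_def split: option.split)

lemma halting_dfa_dmc_step: "halting_dfa {q. state_ok l q} (dmc_step l) (Rows {({}, False)} []) Accept Reject"
proof
  show "dmc_step l q s \<notin> {Accept, Reject}" if "q \<notin> {Accept, Reject}" "s \<noteq> 0" for q s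
    using that by (cases q) (auto split: option.split)
qed (auto simp: finite_state_ok state_ok_dmc_step)

declare bits.simps [simp del]

lemma enc_cell_range: "enc_cell c \<in> {1, 2, 3}"
  by (cases c rule: enc_cell.cases) auto

lemma dec_enc_cell [simp]: "dec_cell (enc_cell c) = c"
  by (cases c rule: enc_cell.cases) (auto simp: dec_cell_def)

lemma foldl_dmc_step_cells:
  "length cur + length r \<le> l \<Longrightarrow> foldl (dmc_step l) (Rows P cur) (map enc_cell r) = Rows P (cur @ r)"
proof (induction r arbitrary: cur)
  case Nil
  then show ?case by simp
next
  case (Cons c r)
  then show ?case using enc_cell_range[of c] by simp
qed

lemma foldl_dmc_step_rows:
  "has_columns l S \<Longrightarrow>
   foldl (dmc_step l) (Rows P []) (concat (map (\<lambda>r. map enc_cell r @ [4]) S)) = Rows (foldl add_row P S) []"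
proof (induction S arbitrary: P)
  case Nil
  then show ?case by simp
next
  case (Cons r S)
  then show ?case using foldl_dmc_step_cells[of "[]" r l P] by (simp add: has_columns_def)
qed

lemma bits_binary: "set (bits n) \<subseteq> {0, 1}"
  by (induction n rule: bits.induct) (subst bits.simps, auto)

lemma foldl_bits: "foldl (\<lambda>v b. 2 * v + b) 0 (bits n) = n"
  by (induction n rule: bits.induct) (subst bits.simps, auto)

lemma foldl_saturated:
  "foldl (\<lambda>v b. min (2 * v + b) L) (min x L) bs = min (foldl (\<lambda>v b. 2 * v + b) x bs) (L :: nat)"
proof (induction bs arbitrary: x)
  case Nil
  then show ?case by simp
next
  case (Cons b bs)
  have "min (2 * min x L + b) L = min (2 * x + b) L" by simp
  then show ?case using Cons[of "2 * x + b"] by simp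
qed

lemma foldl_dmc_step_digits:
  "set bs \<subseteq> {0, 1} \<Longrightarrow> foldl (dmc_step l) (Num P x neg v) (map (\<lambda>b. b + 5) bs)
     = Num P x neg (foldl (\<lambda>v b. min (2 * v + b) (Suc l)) v bs)"
  by (induction bs arbitrary: v) auto

lemma foldl_dmc_step_enc_int:
  "foldl (dmc_step l) (Num P x False 0) (enc_int a) = Num P x (a < 0) (min (nat \<bar>a\<bar>) (Suc l))"
  using foldl_dmc_step_digits[OF bits_binary] foldl_saturated[of "Suc l" 0] foldl_bits
  by (simp add: enc_int_def)

lemma signed_saturated: "signed (a < 0) (min (nat \<bar>a\<bar>) (Suc l)) = clamp l a"
  by (auto simp: signed_def clamp_def)

lemma dmc_step_encode:
  assumes "has_columns l S"
  shows "dmc_step l (foldl (dmc_step l) (Rows {({}, False)} []) (encode S a b)) 0 =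
    (if dmc_yes S a b then Accept else Reject)"
  using assms
  by (simp add: encode_def foldl_dmc_step_rows foldl_dmc_step_enc_int signed_saturated foldl_add_row
      dmc_yes_iff_completion_profiles)

lemma encode_nonblank: "0 \<notin> set (encode S a b)"
proof -
  have "0 \<notin> set (enc_int k)" for k
    using bits_binary[of "nat \<bar>k\<bar>"] by (auto simp: enc_int_def)
  moreover have cell: "enc_cell c \<noteq> 0" for c
    using enc_cell_range[of c] by auto
  ultimately show ?thesis by (auto simp: encode_def cell)
qed

theorem lemma1:
  fixes l :: nat
  assumes "0 < l"
  shows "\<exists>(M :: tm) (c :: nat). wf_tm M \<and> {..8} \<subseteq> tm_symbols M \<and>
    (\<forall>(S :: imatrix) (\<alpha> :: int) (\<beta> :: int).
       S \<noteq> [] \<and> has_columns l S \<and> \<alpha> \<le> \<beta> \<longrightarrow>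
       (\<exists>t \<le> c * length (encode S \<alpha> \<beta>) + c.
          fst (tm_run M (encode S \<alpha> \<beta>) t) =
            (if dmc_yes S \<alpha> \<beta> then tm_accept M else tm_reject M)))"
proof -
  interpret halting_dfa "{q. state_ok l q}" "dmc_step l" "Rows {({}, False)} []" Accept Reject
    by (rule halting_dfa_dmc_step)
  let ?M = "sim_tm {..8}"
  have "fst (tm_run ?M (encode S \<alpha> \<beta>) (Suc (length (encode S \<alpha> \<beta>)))) =
      (if dmc_yes S \<alpha> \<beta> then tm_accept ?M else tm_reject ?M)" if "has_columns l S" for S \<alpha> \<beta>
    using sim_tm_final_state[OF encode_nonblank] dmc_step_encode[OF that] by (simp add: sim_tm_def)
  then show ?thesis
    using wf_sim_tm[of "{..8}"] by (intro exI[of _ ?M] exI[of _ 1]) (auto simp: sim_tm_def)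
qed

end
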